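(* Let $\mathcal{F}\in\mathbb{C}^{q\times q}$ be the unitary discrete Fourier transform, with real and imaginary parts $\mathcal{F}_R,\mathcal{F}_I$, and let $\mathbf{M}\in\{0,1\}^{p\times q}$ be a masking (subsampling) operator whose rows are distinct rows of the $q\times q$ identity; the single-coil MRI forward operator is $\mathbf{A}=\mathbf{M}\mathcal{F}$. Define the real matrices $$\tilde{\mathbf{M}}=\begin{bmatrix}\mathbf{M}&\mathbf{0}\\\mathbf{0}&\mathbf{M}\end{bmatrix},\quad \tilde{\mathcal{F}}=\begin{bmatrix}\mathcal{F}_R&-\mathcal{F}_I\\\mathcal{F}_I&\mathcal{F}_R\end{bmatrix},\quad \tilde{\mathbf{A}}=\tilde{\mathbf{M}}\tilde{\mathcal{F}}\in\mathbb{R}^{2p\times 2q}.$$ Suppose the network outputs vectors in $\mathbb{R}^{2q}$ (real and imaginary parts stacked) and its neural tangent kernel $\tilde{\mathbf{W}}\in\mathbb{R}^{2q\times 2q}$ has the form $$\tilde{\mathbf{W}}=\tilde{\mathcal{F}}^T\tilde{\boldsymbol{\Lambda}}\tilde{\mathcal{F}},\qquad \tilde{\boldsymbol{\Lambda}}=\begin{bmatrix}\boldsymbol{\Lambda}&\mathbf{0}\\\mathbf{0}&\boldsymbol{\Lambda}\end{bmatrix},$$ with $\boldsymbol{\Lambda}\in\mathbb{R}^{q\times q}$ diagonal with diagonal entries $\lambda_1,\dots,\lambda_q$. Let $\mathbf{x}\in\mathbb{C}^q$ be the ground truth image and $\mathbf{y}=\mathbf{A}\mathbf{x}+\mathbf{n}$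 with $\mathbf{n}\in\mathbb{C}^p$ whose real and imaginary parts are independent $\mathcal{N}(\mathbf{0},\tfrac{\sigma^2}{2}\mathbf{I})$. Writing $\tilde{\mathbf{x}},\tilde{\mathbf{y}}$ for the stacked real and imaginary parts of $\mathbf{x},\mathbf{y}$, define the iterates $$\tilde{\mathbf{z}}_{t+1}=\tilde{\mathbf{z}}_t+\eta\,\tilde{\mathbf{W}}\left(\tilde{\mathbf{A}}^T\tilde{\mathbf{y}}-\tilde{\mathbf{A}}^T\tilde{\mathbf{A}}\tilde{\mathbf{z}}_t\right),\qquad\tilde{\mathbf{z}}_0=\mathbf{0}.$$ Then the mean squared error $\mathrm{MSE}_t:=\mathbb{E}_{\mathbf{n}}\|\tilde{\mathbf{z}}_t-\tilde{\mathbf{x}}\|_2^2$ at iteration $t$ is $$\mathrm{MSE}_t=\sum_{i=1}^q\left[(1-\eta\lambda_i m_i)^{2t}\,|(\mathcal{F}\mathbf{x})_i|^2+\sigma^2\left(1-(1-\eta\lambda_i m_i)^t\right)^2\right],$$ where $m_i$ is the $i$th diagonal entry of $\mathbf{M}^T\mathbf{M}$ and $(\mathcal{F}\mathbf{x})_i$ is the $i$th entry of $\mathcal{F}\mathbf{x}$.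
   Context: The recursion models gradient-descent training (step size $\eta>0$) of a deep image prior network with real weights and a two-channel (real/imaginary) output, with loss $\|\tilde{\mathbf{A}}f_\theta(\mathbf{z})-\tilde{\mathbf{y}}\|_2^2$, in the regime where the neural tangent kernel $\tilde{\mathbf{W}}$ stays fixed; $\tilde{\mathbf{z}}_t$ is the network output at iteration $t$. Applying $\tilde{\mathbf{A}}$ to a stacked real/imaginary vector is equivalent to applying $\mathbf{A}$ to the corresponding complex vector. *)

theory Defs
  imports "HOL-Probability.Probability"
begin

text \<open>Matrices are represented as functions nat => nat => real (or complex) with
  explicit dimensions; vectors as functions nat => real (or complex).\<close>

definition dft :: "nat \<Rightarrow> nat \<Rightarrow> nat \<Rightarrow> complex" where
  "dft q j k = cis (- 2 * pi * real j * real k / real q) / complex_of_real (sqrt (real q))"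

definition mmul :: "nat \<Rightarrow> (nat \<Rightarrow> nat \<Rightarrow> real) \<Rightarrow> (nat \<Rightarrow> nat \<Rightarrow> real) \<Rightarrow> nat \<Rightarrow> nat \<Rightarrow> real" where
  "mmul k A B i j = (\<Sum>l<k. A i l * B l j)"

definition mvec :: "nat \<Rightarrow> (nat \<Rightarrow> nat \<Rightarrow> real) \<Rightarrow> (nat \<Rightarrow> real) \<Rightarrow> nat \<Rightarrow> real" where
  "mvec k A v i = (\<Sum>j<k. A i j * v j)"

definition transp :: "(nat \<Rightarrow> nat \<Rightarrow> real) \<Rightarrow> nat \<Rightarrow> nat \<Rightarrow> real" where
  "transp A i j = A j i"

definition blk :: "nat \<Rightarrow> nat \<Rightarrow> (nat \<Rightarrow> nat \<Rightarrow> real) \<Rightarrow> nat \<Rightarrow> nat \<Rightarrow> real" where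
  "blk n m B i j = (if i < n \<and> j < m then B i j
                    else if n \<le> i \<and> m \<le> j then B (i - n) (j - m) else 0)"

definition stack :: "nat \<Rightarrow> (nat \<Rightarrow> complex) \<Rightarrow> nat \<Rightarrow> real" where
  "stack q v i = (if i < q then Re (v i) else Im (v (i - q)))"

definition Ftil :: "nat \<Rightarrow> nat \<Rightarrow> nat \<Rightarrow> real" where
  "Ftil q i j = (if i < q \<and> j < q then Re (dft q i j)
                 else if i < q then - Im (dft q i (j - q))
                 else if j < q then Im (dft q (i - q) j)
                 else Re (dft q (i - q) (j - q)))"

definition Atil :: "nat \<Rightarrow> nat \<Rightarrow> (nat \<Rightarrow> nat \<Rightarrow> real) \<Rightarrow> nat \<Rightarrow> nat \<Rightarrow> real" where
  "Atil p q M = mmul (2 * q) (blk p q M) (Ftil q)"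

definition Wtil :: "nat \<Rightarrow> (nat \<Rightarrow> real) \<Rightarrow> nat \<Rightarrow> nat \<Rightarrow> real" where
  "Wtil q lam = mmul (2 * q)
     (mmul (2 * q) (transp (Ftil q)) (blk q q (\<lambda>i j. if i = j then lam i else 0))) (Ftil q)"

fun ntk_iter :: "real \<Rightarrow> (nat \<Rightarrow> nat \<Rightarrow> real) \<Rightarrow> (nat \<Rightarrow> nat \<Rightarrow> real) \<Rightarrow> nat \<Rightarrow> nat
                 \<Rightarrow> (nat \<Rightarrow> real) \<Rightarrow> nat \<Rightarrow> nat \<Rightarrow> real" where
  "ntk_iter \<eta> W A m n y 0 = (\<lambda>i. 0)"
| "ntk_iter \<eta> W A m n y (Suc t) =
     (\<lambda>i. ntk_iter \<eta> W A m n y t i + \<eta> * mvec n W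
        (\<lambda>j. mvec m (transp A) y j
              - mvec m (transp A) (mvec n A (ntk_iter \<eta> W A m n y t)) j) i)"

definition fwd :: "nat \<Rightarrow> nat \<Rightarrow> (nat \<Rightarrow> nat \<Rightarrow> real) \<Rightarrow> (nat \<Rightarrow> complex) \<Rightarrow> nat \<Rightarrow> complex" where
  "fwd p q M x k = (\<Sum>j<q. (\<Sum>l<q. complex_of_real (M k l) * dft q l j) * x j)"

definition meas :: "nat \<Rightarrow> nat \<Rightarrow> (nat \<Rightarrow> nat \<Rightarrow> real) \<Rightarrow> (nat \<Rightarrow> complex)
                    \<Rightarrow> (nat \<Rightarrow> real) \<Rightarrow> (nat \<Rightarrow> real) \<Rightarrow> nat \<Rightarrow> complex" where
  "meas p q M x nr ni k = fwd p q M x k + Complex (nr k) (ni k)"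

text \<open>Law of one of the real vectors Re n, Im n: i.i.d. N(0, sigma^2/2) entries
  (normal_density takes the standard deviation).\<close>
definition noise_part :: "nat \<Rightarrow> real \<Rightarrow> (nat \<Rightarrow> real) measure" where
  "noise_part p \<sigma> = PiM {..<p} (\<lambda>_. density lborel (normal_density 0 (\<sigma> / sqrt 2)))"

definition MSE :: "nat \<Rightarrow> nat \<Rightarrow> (nat \<Rightarrow> nat \<Rightarrow> real) \<Rightarrow> (nat \<Rightarrow> real) \<Rightarrow> real \<Rightarrow> real
                   \<Rightarrow> (nat \<Rightarrow> complex) \<Rightarrow> nat \<Rightarrow> real" where
  "MSE p q M lam \<eta> \<sigma> x t =
     (\<integral>\<omega>. (\<Sum>i<2 * q.
        (ntk_iter \<eta> (Wtil q lam) (Atil p q M) (2 * p) (2 * q)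
            (stack p (meas p q M x (fst \<omega>) (snd \<omega>))) t i - stack q x i)\<^sup>2)
      \<partial>(noise_part p \<sigma> \<Otimes>\<^sub>M noise_part p \<sigma>))"

end

theory Submission
  imports Defs
begin

text \<open>The realified unitary DFT \<open>Ftil\<close> is orthogonal, and conjugation by it makes both the
  kernel \<open>Wtil\<close> and \<open>Atil\<^sup>T Atil\<close> diagonal, with entries \<open>\<lambda>\<^sub>i\<close> and the mask weights
  \<open>m\<^sub>i \<in> {0, 1}\<close> (each repeated for the real and the imaginary part). In Fourier coordinates the
  iteration therefore decouples into scalar recurrences \<open>a\<^sub>t\<^sub>+\<^sub>1 = a\<^sub>t + \<eta> \<lambda>\<^sub>i (g\<^sub>i - m\<^sub>i a\<^sub>t)\<close>
  with \<open>m\<^sub>i g\<^sub>i = g\<^sub>i\<close>, solved by \<open>a\<^sub>t = (1 - (1 - \<eta> \<lambda>\<^sub>i m\<^sub>i)\<^sup>t) g\<^sub>i\<close>. Here \<open>g = Mtil\<^sup>T ytil\<close> is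
  \<open>m\<^sub>i\<close> times the Fourier coefficient of the image plus a noise term that is a single
  \<open>N(0, \<sigma>\<^sup>2/2)\<close> coordinate if frequency \<open>i\<close> is sampled and \<open>0\<close> otherwise. As \<open>Ftil\<close> preserves
  the norm, the squared error is a sum of squares of affine functions of single Gaussian
  coordinates, whose expectations are elementary second moments.\<close>

section \<open>Matrix--vector products\<close>

lemma sum_lessThan_double:
  "(\<Sum>l<2 * (q::nat). f l) = (\<Sum>l<q. f l) + (\<Sum>l<q. f (l + q))"
proof -
  have "(\<Sum>l<2 * q. f l) = sum f ({..<q} \<union> {q..<q + q})"
    by (rule sum.cong) auto
  also have "\<dots> = (\<Sum>l<q. f l) + (\<Sum>l\<in>{q..<q + q}. f l)"
    by (rule sum.union_disjoint) auto
  also have "(\<Sum>l\<in>{q..<q + q}. f l) = (\<Sum>l<q. f (l + q))"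
    using sum.shift_bounds_nat_ivl[of f 0 q q] by (simp add: atLeast0LessThan)
  finally show ?thesis .
qed

lemma mod_eq_diff_if_less_double:
  "q \<le> i \<Longrightarrow> i < 2 * (q::nat) \<Longrightarrow> i mod q = i - q"
  by (simp add: le_mod_geq)

lemma mvec_mmul: "mvec n (mmul k A B) v i = mvec k A (mvec n B v) i"
proof -
  have "mvec n (mmul k A B) v i = (\<Sum>j<n. \<Sum>l<k. A i l * B l j * v j)"
    by (simp add: mvec_def mmul_def sum_distrib_right)
  also have "\<dots> = (\<Sum>l<k. \<Sum>j<n. A i l * B l j * v j)" by (rule sum.swap)
  also have "\<dots> = mvec k A (mvec n B v) i"
    by (simp add: mvec_def sum_distrib_left mult.assoc)
  finally show ?thesis .
qed

lemma transp_mmul: "transp (mmul k A B) = mmul k (transp B) (transp A)"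
  by (auto simp: fun_eq_iff transp_def mmul_def mult.commute)

lemma mvec_cong: "(\<And>j. j < n \<Longrightarrow> u j = v j) \<Longrightarrow> mvec n A u i = mvec n A v i"
  by (simp add: mvec_def)

lemma mvec_add: "mvec n A (\<lambda>j. u j + v j) i = mvec n A u i + mvec n A v i"
  by (simp add: mvec_def distrib_left sum.distrib)

lemma mvec_diff: "mvec n A (\<lambda>j. u j - v j) i = mvec n A u i - mvec n A v i"
  by (simp add: mvec_def right_diff_distrib sum_subtractf)

lemma mvec_scale: "mvec n A (\<lambda>j. c * u j) i = c * mvec n A u i"
  by (simp add: mvec_def sum_distrib_left mult.left_commute)

lemma mvec_diag:
  "i < n \<Longrightarrow> mvec n (\<lambda>i j. if i = j then d i else 0) v i = d i * v i"
proof -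
  assume "i < n"
  have "mvec n (\<lambda>i j. if i = j then d i else 0) v i = (\<Sum>j<n. if i = j then d i * v j else 0)"
    unfolding mvec_def by (rule sum.cong) auto
  then show ?thesis using \<open>i < n\<close> by simp
qed

lemma mvec_mvec_transp_orthonormal_rows:
  assumes orth: "\<And>i j. i < n \<Longrightarrow> j < n \<Longrightarrow> (\<Sum>l<n. G i l * G j l) = (if i = j then 1 else 0)"
    and i: "i < n"
  shows "mvec n G (mvec n (transp G) u) i = u i"
proof -
  have "mvec n G (mvec n (transp G) u) i = (\<Sum>l<n. \<Sum>j<n. G i l * G j l * u j)"
    by (simp add: mvec_def transp_def sum_distrib_left mult.assoc)
  also have "\<dots> = (\<Sum>j<n. \<Sum>l<n. G i l * G j l * u j)" by (rule sum.swap)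
  also have "\<dots> = (\<Sum>j<n. if i = j then u j else 0)"
    by (rule sum.cong) (simp_all add: orth i sum_distrib_right[symmetric])
  also have "\<dots> = u i" using i by simp
  finally show ?thesis .
qed

lemma sum_sq_mvec_orthonormal_cols:
  assumes orth: "\<And>i j. i < n \<Longrightarrow> j < n \<Longrightarrow> (\<Sum>l<n. G l i * G l j) = (if i = j then 1 else 0)"
  shows "(\<Sum>i<n. (mvec n G u i)\<^sup>2) = (\<Sum>i<n. (u i)\<^sup>2)"
proof -
  have "(\<Sum>i<n. (mvec n G u i)\<^sup>2) = (\<Sum>i<n. \<Sum>j<n. \<Sum>k<n. G i j * G i k * (u j * u k))"
    by (simp add: mvec_def power2_eq_square sum_product algebra_simps)
  also have "\<dots> = (\<Sum>j<n. \<Sum>i<n. \<Sum>k<n. G i j * G i k * (u j * u k))" by (rule sum.swap)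
  also have "\<dots> = (\<Sum>j<n. \<Sum>k<n. \<Sum>i<n. G i j * G i k * (u j * u k))"
    by (rule sum.cong[OF refl], rule sum.swap)
  also have "\<dots> = (\<Sum>j<n. \<Sum>k<n. if j = k then u j * u k else 0)"
    by (intro sum.cong refl) (simp add: sum_distrib_right[symmetric] orth)
  also have "\<dots> = (\<Sum>j<n. (u j)\<^sup>2)"
    by (simp add: power2_eq_square)
  finally show ?thesis .
qed

lemma mvec_blk:
  "mvec (2 * q) (blk p q B) v k =
     (if k < p then mvec q B v k else mvec q B (\<lambda>j. v (j + q)) (k - p))"
  by (auto simp: mvec_def sum_lessThan_double blk_def)

lemma mvec_transp_blk:
  "mvec (2 * p) (transp (blk p q B)) w i =
     (if i < q then mvec p (transp B) w i else mvec p (transp B) (\<lambda>k. w (k + p)) (i - q))"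
  by (auto simp: mvec_def sum_lessThan_double blk_def transp_def)

lemma mvec_blk_diag:
  "i < 2 * q \<Longrightarrow> mvec (2 * q) (blk q q (\<lambda>i j. if i = j then d i else 0)) v i = d (i mod q) * v i"
  by (auto simp: mvec_blk mvec_diag mod_eq_diff_if_less_double)

section \<open>The realified discrete Fourier transform\<close>

definition dftv :: "nat \<Rightarrow> (nat \<Rightarrow> complex) \<Rightarrow> nat \<Rightarrow> complex" where
  "dftv q x i = (\<Sum>j<q. dft q i j * x j)"

lemma dft_sym: "dft q j k = dft q k j"
  by (simp add: dft_def mult.commute mult.left_commute)

lemma cis_2pi_fraction_neq_1:
  fixes d :: int
  assumes "d \<noteq> 0" "\<bar>d\<bar> < int q"
  shows "cis (2 * pi * real_of_int d / real q) \<noteq> 1"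
proof
  assume "cis (2 * pi * real_of_int d / real q) = 1"
  then have "cos (2 * pi * real_of_int d / real q) = 1"
    by (metis cis.sel(1) one_complex.sel(1))
  then obtain n :: int where n: "2 * pi * real_of_int d / real q = real_of_int n * 2 * pi"
    using cos_one_2pi_int by (metis of_int_mult of_int_numeral)
  have "real q > 0" using assms by auto
  with n have "real_of_int d = real_of_int n * real q"
    by (simp add: field_simps)
  then have dn: "d = n * int q" by (metis of_int_eq_iff of_int_mult of_int_of_nat_eq)
  show False
  proof (cases "n = 0")
    case True
    then show ?thesis using dn assms by simp
  next
    case False
    then have "\<bar>n\<bar> \<ge> 1" by simp
    then have "\<bar>n * int q\<bar> \<ge> int q" by (simp add: abs_mult mult_le_cancel_right1)
    then show ?thesis using dn assms by simp
  qed
qed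

lemma dft_orthonormal_rows:
  assumes "i < q" "j < q"
  shows "(\<Sum>l<q. dft q i l * cnj (dft q j l)) = (if i = j then 1 else 0)"
proof -
  define w where "w = cis (2 * pi * (real j - real i) / real q)"
  have q: "real q > 0" using assms by auto
  have term_eq: "dft q i l * cnj (dft q j l) = w ^ l / of_real (real q)" for l
  proof -
    have angle: "- 2 * pi * real i * real l / real q + 2 * pi * real j * real l / real q
            = real l * (2 * pi * (real j - real i) / real q)"
      using q by (simp add: field_simps)
    have "cis (- 2 * pi * real i * real l / real q) * cis (2 * pi * real j * real l / real q) = w ^ l"
      unfolding w_def cis_mult angle by (rule Complex.DeMoivre[symmetric])
    moreover have "of_real (sqrt (real q)) * of_real (sqrt (real q)) = (of_real (real q) :: complex)"
      by (subst of_real_mult[symmetric]) simp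
    ultimately show ?thesis
      by (simp add: dft_def cis_cnj)
  qed
  have "(\<Sum>l<q. dft q i l * cnj (dft q j l)) = (\<Sum>l<q. w ^ l) / of_real (real q)"
    by (simp add: term_eq sum_divide_distrib)
  also have "\<dots> = (if i = j then 1 else 0)"
  proof (cases "i = j")
    case True
    then show ?thesis using q by (simp add: w_def)
  next
    case False
    have "w \<noteq> 1"
      unfolding w_def using cis_2pi_fraction_neq_1[of "int j - int i" q] False assms by simp
    moreover have "w ^ q = 1"
    proof -
      have "w ^ q = cis (2 * pi * real_of_int (int j - int i))"
        unfolding w_def Complex.DeMoivre using q by simp
      also have "\<dots> = 1" by (metis Ints_of_int cis_multiple_2pi mult.assoc)
      finally show ?thesis .
    qed
    ultimately show ?thesis using False by (simp add: geometric_sum)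
  qed
  finally show ?thesis .
qed

lemma Ftil_orthonormal_rows:
  assumes "i < 2 * q" "j < 2 * q"
  shows "(\<Sum>l<2 * q. Ftil q i l * Ftil q j l) = (if i = j then 1 else 0)"
proof -
  have re: "(\<Sum>l<q. Re (dft q a l) * Re (dft q b l) + Im (dft q a l) * Im (dft q b l))
              = (if a = b then 1 else 0)"
    and im: "(\<Sum>l<q. Im (dft q a l) * Re (dft q b l) - Re (dft q a l) * Im (dft q b l)) = 0"
    if "a < q" "b < q" for a b
    using arg_cong[OF dft_orthonormal_rows[OF that], of Re]
      arg_cong[OF dft_orthonormal_rows[OF that], of Im]
    by (simp_all add: Re_sum Im_sum)
  have split: "(\<Sum>l<2 * q. Ftil q i l * Ftil q j l)
      = (\<Sum>l<q. Ftil q i l * Ftil q j l + Ftil q i (l + q) * Ftil q j (l + q))"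
    by (simp add: sum_lessThan_double sum.distrib)
  have upper: "\<not> k < q \<Longrightarrow> k < 2 * q \<Longrightarrow> \<exists>a. k = a + q \<and> a < q" for k
    by (intro exI[of _ "k - q"]) auto
  consider "i < q" "j < q" | a where "i < q" "j = a + q" "a < q"
    | a where "i = a + q" "a < q" "j < q" | a b where "i = a + q" "a < q" "j = b + q" "b < q"
    using upper assms by (metis linorder_not_less)
  then show ?thesis
  proof cases
    case 1
    then show ?thesis unfolding split using re[of i j] by (simp add: Ftil_def)
  next
    case (2 a)
    then show ?thesis
      unfolding split using im[of a i] by (simp add: Ftil_def algebra_simps)
  next
    case (3 a)
    then show ?thesis unfolding split using im[of a j] by (simp add: Ftil_def algebra_simps)
  next
    case (4 a b)
    then show ?thesis unfolding split using re[of a b] by (simp add: Ftil_def algebra_simps)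
  qed
qed

lemma Ftil_orthonormal_cols:
  assumes i: "i < 2 * q" and j: "j < 2 * q"
  shows "(\<Sum>l<2 * q. Ftil q l i * Ftil q l j) = (if i = j then 1 else 0)"
proof -
  define s where "s k = (if k < q then 1 else - 1 :: real)" for k
  \<comment> \<open>By the symmetry of the DFT, transposing Ftil only flips the signs of its off-diagonal blocks.\<close>
  have transp_sign: "Ftil q l k = s k * s l * Ftil q k l" if "k < 2 * q" "l < 2 * q" for k l
    using that by (auto simp: Ftil_def s_def dft_sym)
  have "(\<Sum>l<2 * q. Ftil q l i * Ftil q l j) = (\<Sum>l<2 * q. (s i * s j) * (Ftil q i l * Ftil q j l))"
  proof (rule sum.cong)
    fix l assume "l \<in> {..<2 * q}"
    moreover have "s l * s l = 1" by (simp add: s_def)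
    ultimately show "Ftil q l i * Ftil q l j = (s i * s j) * (Ftil q i l * Ftil q j l)"
      using transp_sign[OF i] transp_sign[OF j] by (simp add: algebra_simps)
  qed simp
  also have "\<dots> = (if i = j then 1 else 0)"
    by (simp add: sum_distrib_left[symmetric] Ftil_orthonormal_rows[OF i j] s_def)
  finally show ?thesis .
qed

lemma mvec_Ftil_transp_Ftil:
  "i < 2 * q \<Longrightarrow> mvec (2 * q) (Ftil q) (mvec (2 * q) (transp (Ftil q)) u) i = u i"
  by (rule mvec_mvec_transp_orthonormal_rows[OF Ftil_orthonormal_rows])

lemma sum_sq_mvec_Ftil:
  "(\<Sum>i<2 * q. (mvec (2 * q) (Ftil q) u i)\<^sup>2) = (\<Sum>i<2 * q. (u i)\<^sup>2)"
  by (rule sum_sq_mvec_orthonormal_cols[OF Ftil_orthonormal_cols])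

lemma mvec_Ftil_stack:
  "i < 2 * q \<Longrightarrow> mvec (2 * q) (Ftil q) (stack q x) i = stack q (dftv q x) i"
  by (auto simp: mvec_def sum_lessThan_double Ftil_def stack_def dftv_def Re_sum Im_sum
      sum.distrib[symmetric] intro!: sum.cong)

section \<open>Fourier coordinates of the forward operator and the kernel\<close>

lemma mvec_Atil: "mvec (2 * q) (Atil p q M) z = mvec (2 * q) (blk p q M) (mvec (2 * q) (Ftil q) z)"
  by (auto simp: fun_eq_iff Atil_def mvec_mmul)

lemma mvec_Ftil_transp_Atil:
  "i < 2 * q \<Longrightarrow> mvec (2 * q) (Ftil q) (mvec (2 * p) (transp (Atil p q M)) w) i
     = mvec (2 * p) (transp (blk p q M)) w i"
  by (simp add: Atil_def transp_mmul mvec_mmul[abs_def] mvec_Ftil_transp_Ftil)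

lemma mvec_Ftil_Wtil:
  "i < 2 * q \<Longrightarrow> mvec (2 * q) (Ftil q) (mvec (2 * q) (Wtil q lam) d) i
     = lam (i mod q) * mvec (2 * q) (Ftil q) d i"
  by (simp add: Wtil_def mvec_mmul[abs_def] mvec_Ftil_transp_Ftil mvec_blk_diag)

lemma affine_recurrence_closed_form:
  fixes a :: "nat \<Rightarrow> real"
  assumes "a 0 = 0" and "\<And>t. a (Suc t) = a t + h * (g - m * a t)" and "m * g = g"
  shows "a t = (1 - (1 - h * m) ^ t) * g"
proof (induction t)
  case 0
  then show ?case using assms(1) by simp
next
  case (Suc t)
  have "a (Suc t) = (1 - (1 - h * m) ^ t) * g + h * (g - m * ((1 - (1 - h * m) ^ t) * g))"
    unfolding assms(2) Suc.IH ..
  also have "\<dots> = (1 - (1 - h * m) ^ Suc t) * g + h * (g - m * g)"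
    by (simp add: algebra_simps)
  also have "\<dots> = (1 - (1 - h * m) ^ Suc t) * g"
    using assms(3) by simp
  finally show ?case .
qed

lemma stack_fwd:
  "stack p (fwd p q M x) k = mvec (2 * q) (blk p q M) (stack q (dftv q x)) k"
proof -
  have "fwd p q M x k = (\<Sum>j<q. \<Sum>l<q. complex_of_real (M k l) * dft q l j * x j)" for k
    by (simp add: fwd_def sum_distrib_right)
  also have "\<dots> k = (\<Sum>l<q. complex_of_real (M k l) * dftv q x l)" for k
    by (subst sum.swap) (simp add: dftv_def sum_distrib_left mult.assoc)
  finally show ?thesis
    unfolding mvec_blk by (simp add: stack_def Re_sum Im_sum mvec_def)
qed

lemma mvec_transp_blk_stack:
  assumes "i < q"
  shows "mvec (2 * p) (transp (blk p q B)) (stack p w) i = (\<Sum>k<p. B k i * Re (w k))"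
    and "mvec (2 * p) (transp (blk p q B)) (stack p w) (i + q) = (\<Sum>k<p. B k i * Im (w k))"
  using assms unfolding mvec_transp_blk by (simp_all add: mvec_def transp_def stack_def)

section \<open>Gaussian second moments\<close>

lemma distr_pair_snd:
  assumes "prob_space M1" "sigma_finite_measure M2"
  shows "distr (M1 \<Otimes>\<^sub>M M2) M2 snd = M2"
proof (intro measure_eqI)
  interpret P: pair_sigma_finite M1 M2
    using assms by (simp add: pair_sigma_finite_def prob_space_imp_sigma_finite)
  fix A assume A: "A \<in> sets (distr (M1 \<Otimes>\<^sub>M M2) M2 snd)"
  then have "emeasure (distr (M1 \<Otimes>\<^sub>M M2) M2 snd) A = emeasure (M1 \<Otimes>\<^sub>M M2) (space M1 \<times> A)"
    by (auto simp: emeasure_distr space_pair_measure dest: sets.sets_into_space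
        intro!: arg_cong2[where f = emeasure])
  also have "\<dots> = emeasure M1 (space M1) * emeasure M2 A"
    using A by (intro sigma_finite_measure.emeasure_pair_measure_Times[OF assms(2)]) auto
  finally show "emeasure (distr (M1 \<Otimes>\<^sub>M M2) M2 snd) A = emeasure M2 A"
    using assms(1) by (simp add: prob_space.emeasure_space_1)
qed simp

lemma has_bochner_integral_normal_affine_sq:
  assumes s: "s > 0"
  shows "has_bochner_integral (density lborel (normal_density 0 s)) (\<lambda>v. (a + b * v)\<^sup>2) (a\<^sup>2 + b\<^sup>2 * s\<^sup>2)"
proof (rule has_bochner_integral_density)
  have "has_bochner_integral lborel (\<lambda>v. normal_density 0 s v) 1"
    using integrable_normal_density[OF s] integral_normal_density[OF s]
    by (simp add: has_bochner_integral_iff)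
  moreover have "has_bochner_integral lborel (\<lambda>v. normal_density 0 s v * v) 0"
    using normal_moment_nz_1[OF s] .
  moreover have "has_bochner_integral lborel (\<lambda>v. normal_density 0 s v * v\<^sup>2) (s\<^sup>2)"
    using normal_moment_even[OF s, of 0 1]
    by (simp add: power2_eq_square mult.commute mult.left_commute)
  ultimately have "has_bochner_integral lborel
      (\<lambda>v. a\<^sup>2 * normal_density 0 s v + (2 * a * b) * (normal_density 0 s v * v)
             + b\<^sup>2 * (normal_density 0 s v * v\<^sup>2))
      (a\<^sup>2 * 1 + (2 * a * b) * 0 + b\<^sup>2 * s\<^sup>2)"
    by (intro has_bochner_integral_add has_bochner_integral_mult_right)
  then show "has_bochner_integral lborel (\<lambda>v. normal_density 0 s v *\<^sub>R (a + b * v)\<^sup>2) (a\<^sup>2 + b\<^sup>2 * s\<^sup>2)"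
    by (simp add: power2_eq_square algebra_simps)
qed auto

lemma has_bochner_integral_noise_component_sq:
  assumes \<sigma>: "\<sigma> > 0" and k: "k < p" and T: "T = fst \<or> T = snd"
  shows "has_bochner_integral (noise_part p \<sigma> \<Otimes>\<^sub>M noise_part p \<sigma>)
           (\<lambda>\<omega>. (a + b * T \<omega> k)\<^sup>2) (a\<^sup>2 + b\<^sup>2 * (\<sigma>\<^sup>2 / 2))"
proof -
  define s where "s = \<sigma> / sqrt 2"
  define G where "G = density lborel (normal_density 0 s)"
  define N where "N = noise_part p \<sigma>"
  have s: "s > 0" using \<sigma> by (simp add: s_def)
  have N: "N = PiM {..<p} (\<lambda>_. G)" by (simp add: N_def G_def noise_part_def s_def)
  have G: "prob_space G" unfolding G_def by (rule prob_space_normal_density[OF s])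
  then have "prob_space N" unfolding N by (intro prob_space_PiM) simp
  then have T_meas: "T \<in> measurable (N \<Otimes>\<^sub>M N) N" and T_distr: "distr (N \<Otimes>\<^sub>M N) N T = N"
    using T by (auto intro: prob_space.distr_pair_fst distr_pair_snd prob_space_imp_sigma_finite)
  have comp_meas: "(\<lambda>f. f k) \<in> measurable N G"
    unfolding N using k by (simp add: measurable_component_singleton)
  have X_meas: "(\<lambda>\<omega>. T \<omega> k) \<in> measurable (N \<Otimes>\<^sub>M N) G"
    using measurable_compose[OF T_meas comp_meas] .
  have "distr (N \<Otimes>\<^sub>M N) G (\<lambda>\<omega>. T \<omega> k) = distr N G (\<lambda>f. f k)"
    using distr_distr[OF comp_meas T_meas] T_distr by (simp add: comp_def)
  also have "\<dots> = G"
    unfolding N using distr_PiM_component[of "{..<p}" "\<lambda>_. G" k] G k by simp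
  finally have X_distr: "distr (N \<Otimes>\<^sub>M N) G (\<lambda>\<omega>. T \<omega> k) = G" .
  have f_meas: "(\<lambda>v::real. (a + b * v)\<^sup>2) \<in> borel_measurable G"
    by (simp add: G_def)
  have "has_bochner_integral (distr (N \<Otimes>\<^sub>M N) G (\<lambda>\<omega>. T \<omega> k)) (\<lambda>v. (a + b * v)\<^sup>2) (a\<^sup>2 + b\<^sup>2 * s\<^sup>2)"
    unfolding X_distr unfolding G_def by (rule has_bochner_integral_normal_affine_sq[OF s])
  then have "has_bochner_integral (N \<Otimes>\<^sub>M N) (\<lambda>\<omega>. (a + b * T \<omega> k)\<^sup>2) (a\<^sup>2 + b\<^sup>2 * s\<^sup>2)"
    using X_meas f_meas by (simp add: has_bochner_integral_iff integrable_distr_eq integral_distr)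
  moreover have "s\<^sup>2 = \<sigma>\<^sup>2 / 2" by (simp add: s_def power_divide)
  ultimately show ?thesis by (simp add: N_def)
qed

section \<open>Gradient descent under a sampling mask\<close>

locale sampling_mask =
  fixes p q :: nat and M :: "nat \<Rightarrow> nat \<Rightarrow> real" and r :: "nat \<Rightarrow> nat"
  assumes inj: "inj_on r {..<p}" and r_less: "\<And>k. k < p \<Longrightarrow> r k < q"
    and M_eq: "\<And>k j. k < p \<Longrightarrow> j < q \<Longrightarrow> M k j = (if j = r k then 1 else 0)"
begin

definition mdiag :: "nat \<Rightarrow> real" where
  "mdiag i = (\<Sum>k<p. M k i * M k i)"

lemma mvec_transp_mask_mask:
  assumes "i < q"
  shows "mvec p (transp M) (mvec q M v) i = mdiag i * v i"
proof -
  have "mvec q M v k = v (r k)" if "k < p" for k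
  proof -
    have "mvec q M v k = (\<Sum>j<q. if j = r k then v j else 0)"
      unfolding mvec_def by (rule sum.cong) (simp_all add: M_eq that)
    then show ?thesis using r_less[OF that] by simp
  qed
  then have "mvec p (transp M) (mvec q M v) i = (\<Sum>k<p. M k i * v (r k))"
    by (simp add: mvec_def transp_def)
  also have "\<dots> = (\<Sum>k<p. M k i * M k i * v i)"
    by (rule sum.cong) (simp_all add: M_eq assms)
  also have "\<dots> = mdiag i * v i" by (simp add: mdiag_def sum_distrib_right)
  finally show ?thesis .
qed

lemma mask_column_cases:
  assumes "i < q"
  obtains k0 where "k0 < p" "mdiag i = 1" "\<And>k. k < p \<Longrightarrow> M k i = (if k = k0 then 1 else 0)"
  | "mdiag i = 0" "\<And>k. k < p \<Longrightarrow> M k i = 0"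
proof (cases "\<exists>k0<p. r k0 = i")
  case True
  then obtain k0 where k0: "k0 < p" "r k0 = i" by blast
  have col: "M k i = (if k = k0 then 1 else 0)" if "k < p" for k
    using k0 inj assms that by (auto simp: M_eq inj_on_def)
  have "mdiag i = (\<Sum>k<p. if k = k0 then 1 else 0)"
    unfolding mdiag_def by (rule sum.cong) (simp_all add: col)
  with k0 col that(1) show ?thesis by simp
next
  case False
  then have "M k i = 0" if "k < p" for k
    using assms that by (auto simp: M_eq)
  with that(2) show ?thesis by (simp add: mdiag_def)
qed

lemma mdiag_0_or_1: "i < q \<Longrightarrow> mdiag i = 0 \<or> mdiag i = 1"
  by (erule mask_column_cases) auto

lemma mvec_transp_blk_blk:
  assumes i: "i < 2 * q"
  shows "mvec (2 * p) (transp (blk p q M)) (mvec (2 * q) (blk p q M) v) i = mdiag (i mod q) * v i"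
proof (cases "i < q")
  case True
  then have "mvec (2 * p) (transp (blk p q M)) (mvec (2 * q) (blk p q M) v) i
      = mvec p (transp M) (mvec (2 * q) (blk p q M) v) i"
    by (simp add: mvec_transp_blk)
  also have "\<dots> = mvec p (transp M) (mvec q M v) i"
    by (rule mvec_cong) (simp add: mvec_blk)
  finally show ?thesis using True by (simp add: mvec_transp_mask_mask)
next
  case False
  then have "mvec (2 * p) (transp (blk p q M)) (mvec (2 * q) (blk p q M) v) i
      = mvec p (transp M) (\<lambda>k. mvec (2 * q) (blk p q M) v (k + p)) (i - q)"
    by (simp add: mvec_transp_blk)
  also have "\<dots> = mvec p (transp M) (mvec q M (\<lambda>j. v (j + q))) (i - q)"
    by (rule mvec_cong) (simp add: mvec_blk)
  finally show ?thesis
    using False i by (simp add: mvec_transp_mask_mask mod_eq_diff_if_less_double)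
qed

lemma mdiag_mult_mvec_transp_blk:
  assumes i: "i < 2 * q"
  shows "mdiag (i mod q) * mvec (2 * p) (transp (blk p q M)) y i = mvec (2 * p) (transp (blk p q M)) y i"
proof -
  have "i mod q < q" using i by simp
  then show ?thesis
  proof (cases rule: mask_column_cases)
    case 2
    then have "mvec (2 * p) (transp (blk p q M)) y i = 0"
      using i unfolding mvec_transp_blk by (auto simp: mvec_def transp_def mod_eq_diff_if_less_double)
    then show ?thesis by simp
  qed simp
qed

abbreviation iterate :: "real \<Rightarrow> (nat \<Rightarrow> real) \<Rightarrow> (nat \<Rightarrow> real) \<Rightarrow> nat \<Rightarrow> nat \<Rightarrow> real" where
  "iterate \<eta> lam y t \<equiv> ntk_iter \<eta> (Wtil q lam) (Atil p q M) (2 * p) (2 * q) y t"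

definition decay :: "real \<Rightarrow> (nat \<Rightarrow> real) \<Rightarrow> nat \<Rightarrow> real" where
  "decay \<eta> lam i = 1 - \<eta> * lam i * mdiag i"

lemma mvec_Ftil_iterate_Suc:
  assumes i: "i < 2 * q"
  shows "mvec (2 * q) (Ftil q) (iterate \<eta> lam y (Suc t)) i
    = mvec (2 * q) (Ftil q) (iterate \<eta> lam y t) i + \<eta> * lam (i mod q) *
      (mvec (2 * p) (transp (blk p q M)) y i
        - mdiag (i mod q) * mvec (2 * q) (Ftil q) (iterate \<eta> lam y t) i)"
proof -
  let ?F = "Ftil q" and ?A = "Atil p q M" and ?B = "blk p q M" and ?z = "iterate \<eta> lam y t"
  define d where "d = (\<lambda>j. mvec (2 * p) (transp ?A) y j - mvec (2 * p) (transp ?A) (mvec (2 * q) ?A ?z) j)"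
  have "iterate \<eta> lam y (Suc t) = (\<lambda>j. ?z j + \<eta> * mvec (2 * q) (Wtil q lam) d j)"
    by (simp add: d_def)
  then have "mvec (2 * q) ?F (iterate \<eta> lam y (Suc t)) i
      = mvec (2 * q) ?F ?z i + \<eta> * mvec (2 * q) ?F (mvec (2 * q) (Wtil q lam) d) i"
    by (simp only: mvec_add mvec_scale)
  also have "mvec (2 * q) ?F (mvec (2 * q) (Wtil q lam) d) i = lam (i mod q) * mvec (2 * q) ?F d i"
    by (rule mvec_Ftil_Wtil[OF i])
  also have "mvec (2 * q) ?F d i
      = mvec (2 * p) (transp ?B) y i - mvec (2 * p) (transp ?B) (mvec (2 * q) ?B (mvec (2 * q) ?F ?z)) i"
    unfolding d_def mvec_diff mvec_Ftil_transp_Atil[OF i] mvec_Atil ..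
  also have "mvec (2 * p) (transp ?B) (mvec (2 * q) ?B (mvec (2 * q) ?F ?z)) i
      = mdiag (i mod q) * mvec (2 * q) ?F ?z i"
    by (rule mvec_transp_blk_blk[OF i])
  finally show ?thesis by (simp add: mult.assoc)
qed

lemma mvec_Ftil_iterate:
  assumes i: "i < 2 * q"
  shows "mvec (2 * q) (Ftil q) (iterate \<eta> lam y t) i
    = (1 - decay \<eta> lam (i mod q) ^ t) * mvec (2 * p) (transp (blk p q M)) y i"
  unfolding decay_def
proof (rule affine_recurrence_closed_form)
  show "mvec (2 * q) (Ftil q) (iterate \<eta> lam y 0) i = 0"
    by (simp add: mvec_def)
qed (simp_all only: mvec_Ftil_iterate_Suc[OF i] mdiag_mult_mvec_transp_blk[OF i])


lemma one_sub_decay_pow_mult_mdiag: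
  "i < q \<Longrightarrow> (1 - decay \<eta> lam i ^ t) * mdiag i = 1 - decay \<eta> lam i ^ t"
  using mdiag_0_or_1[of i] by (auto simp: decay_def)

lemma mvec_transp_blk_stack_meas:
  assumes i: "i < 2 * q"
  shows "mvec (2 * p) (transp (blk p q M)) (stack p (meas p q M x nr ni)) i
     = mdiag (i mod q) * stack q (dftv q x) i
       + mvec (2 * p) (transp (blk p q M)) (stack p (\<lambda>k. Complex (nr k) (ni k))) i"
proof -
  have "stack p (meas p q M x nr ni)
      = (\<lambda>k. mvec (2 * q) (blk p q M) (stack q (dftv q x)) k + stack p (\<lambda>k. Complex (nr k) (ni k)) k)"
    by (auto simp: fun_eq_iff stack_fwd[symmetric] stack_def meas_def)
  then show ?thesis by (simp only: mvec_add mvec_transp_blk_blk[OF i])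
qed

lemma mvec_Ftil_error:
  assumes i: "i < 2 * q"
  shows "mvec (2 * q) (Ftil q) (\<lambda>j. iterate \<eta> lam (stack p (meas p q M x nr ni)) t j - stack q x j) i
    = - (decay \<eta> lam (i mod q) ^ t) * stack q (dftv q x) i
      + (1 - decay \<eta> lam (i mod q) ^ t)
        * mvec (2 * p) (transp (blk p q M)) (stack p (\<lambda>k. Complex (nr k) (ni k))) i"
proof -
  have "i mod q < q" using i by simp
  then have m: "(1 - decay \<eta> lam (i mod q) ^ t) * mdiag (i mod q) = 1 - decay \<eta> lam (i mod q) ^ t"
    by (rule one_sub_decay_pow_mult_mdiag)
  show ?thesis
    unfolding mvec_diff mvec_Ftil_stack[OF i] mvec_Ftil_iterate[OF i] mvec_transp_blk_stack_meas[OF i]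
    by (simp only: distrib_left mult.assoc[symmetric] m) (simp add: algebra_simps)
qed


lemma sum_sq_error_eq:
  "(\<Sum>i<2 * q. (iterate \<eta> lam (stack p (meas p q M x nr ni)) t i - stack q x i)\<^sup>2)
   = (\<Sum>i<q. (- (decay \<eta> lam i ^ t) * Re (dftv q x i) + (1 - decay \<eta> lam i ^ t) * (\<Sum>k<p. M k i * nr k))\<^sup>2
           + (- (decay \<eta> lam i ^ t) * Im (dftv q x i) + (1 - decay \<eta> lam i ^ t) * (\<Sum>k<p. M k i * ni k))\<^sup>2)"
  (is "?lhs = ?rhs")
proof -
  let ?e = "\<lambda>j. iterate \<eta> lam (stack p (meas p q M x nr ni)) t j - stack q x j"
  have "?lhs = (\<Sum>i<2 * q. (mvec (2 * q) (Ftil q) ?e i)\<^sup>2)"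
    by (rule sum_sq_mvec_Ftil[symmetric])
  also have "\<dots> = (\<Sum>i<2 * q. (- (decay \<eta> lam (i mod q) ^ t) * stack q (dftv q x) i
      + (1 - decay \<eta> lam (i mod q) ^ t)
        * mvec (2 * p) (transp (blk p q M)) (stack p (\<lambda>k. Complex (nr k) (ni k))) i)\<^sup>2)"
    by (intro sum.cong refl) (simp add: mvec_Ftil_error)
  also have "\<dots> = ?rhs"
    unfolding sum_lessThan_double sum.distrib[symmetric]
    by (intro sum.cong refl) (simp add: mvec_transp_blk_stack stack_def)
  finally show ?thesis .
qed

lemma has_bochner_integral_masked_noise_sq:
  assumes \<sigma>: "\<sigma> > 0" and j: "j < q" and T: "T = fst \<or> T = snd"
  shows "has_bochner_integral (noise_part p \<sigma> \<Otimes>\<^sub>M noise_part p \<sigma>)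
           (\<lambda>\<omega>. (a + b * (\<Sum>k<p. M k j * T \<omega> k))\<^sup>2) (a\<^sup>2 + b\<^sup>2 * mdiag j * (\<sigma>\<^sup>2 / 2))"
  using j
proof (cases rule: mask_column_cases)
  case (1 k0)
  then have "(\<Sum>k<p. M k j * T \<omega> k) = (\<Sum>k<p. if k = k0 then T \<omega> k else 0)" for \<omega>
    by (intro sum.cong) simp_all
  then have "(\<Sum>k<p. M k j * T \<omega> k) = T \<omega> k0" for \<omega>
    using \<open>k0 < p\<close> by simp
  then show ?thesis
    using has_bochner_integral_noise_component_sq[OF \<sigma> \<open>k0 < p\<close> T] \<open>mdiag j = 1\<close> by simp
next
  case 2
  interpret prob_space "noise_part p \<sigma> \<Otimes>\<^sub>M noise_part p \<sigma>"
    unfolding noise_part_def using \<sigma>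
    by (intro prob_space_pair prob_space_PiM prob_space_normal_density) auto
  show ?thesis
    using 2 by (simp add: has_bochner_integral_iff prob_space)
qed

lemma has_bochner_integral_sq_error:
  assumes \<sigma>: "\<sigma> > 0"
  shows "has_bochner_integral (noise_part p \<sigma> \<Otimes>\<^sub>M noise_part p \<sigma>)
    (\<lambda>\<omega>. \<Sum>i<2 * q. (iterate \<eta> lam (stack p (meas p q M x (fst \<omega>) (snd \<omega>))) t i - stack q x i)\<^sup>2)
    (\<Sum>i<q. decay \<eta> lam i ^ (2 * t) * (cmod (dftv q x i))\<^sup>2 + \<sigma>\<^sup>2 * (1 - decay \<eta> lam i ^ t)\<^sup>2)"
proof -
  let ?c = "\<lambda>i. decay \<eta> lam i ^ t"
  have "has_bochner_integral (noise_part p \<sigma> \<Otimes>\<^sub>M noise_part p \<sigma>)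
     (\<lambda>\<omega>. \<Sum>i<q. (- ?c i * Re (dftv q x i) + (1 - ?c i) * (\<Sum>k<p. M k i * fst \<omega> k))\<^sup>2
               + (- ?c i * Im (dftv q x i) + (1 - ?c i) * (\<Sum>k<p. M k i * snd \<omega> k))\<^sup>2)
     (\<Sum>i<q. ((- ?c i * Re (dftv q x i))\<^sup>2 + (1 - ?c i)\<^sup>2 * mdiag i * (\<sigma>\<^sup>2 / 2))
               + ((- ?c i * Im (dftv q x i))\<^sup>2 + (1 - ?c i)\<^sup>2 * mdiag i * (\<sigma>\<^sup>2 / 2)))"
    by (intro has_bochner_integral_sum has_bochner_integral_add has_bochner_integral_masked_noise_sq[OF \<sigma>])
      auto
  also have "(\<Sum>i<q. ((- ?c i * Re (dftv q x i))\<^sup>2 + (1 - ?c i)\<^sup>2 * mdiag i * (\<sigma>\<^sup>2 / 2))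
               + ((- ?c i * Im (dftv q x i))\<^sup>2 + (1 - ?c i)\<^sup>2 * mdiag i * (\<sigma>\<^sup>2 / 2)))
      = (\<Sum>i<q. decay \<eta> lam i ^ (2 * t) * (cmod (dftv q x i))\<^sup>2 + \<sigma>\<^sup>2 * (1 - ?c i)\<^sup>2)"
  proof (intro sum.cong refl)
    fix i assume "i \<in> {..<q}"
    then have "(1 - ?c i)\<^sup>2 * mdiag i = (1 - ?c i)\<^sup>2"
      using one_sub_decay_pow_mult_mdiag[of i] by (simp add: power2_eq_square)
    then show "((- ?c i * Re (dftv q x i))\<^sup>2 + (1 - ?c i)\<^sup>2 * mdiag i * (\<sigma>\<^sup>2 / 2))
               + ((- ?c i * Im (dftv q x i))\<^sup>2 + (1 - ?c i)\<^sup>2 * mdiag i * (\<sigma>\<^sup>2 / 2))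
      = decay \<eta> lam i ^ (2 * t) * (cmod (dftv q x i))\<^sup>2 + \<sigma>\<^sup>2 * (1 - ?c i)\<^sup>2"
      by (simp add: cmod_power2 power_mult power_mult_distrib mult.commute[of 2 t] algebra_simps)
  qed
  finally show ?thesis
    unfolding sum_sq_error_eq .
qed

end

theorem corollary1:
  fixes p q :: nat and M :: "nat \<Rightarrow> nat \<Rightarrow> real" and lam :: "nat \<Rightarrow> real"
    and \<eta> \<sigma> :: real and x :: "nat \<Rightarrow> complex" and t :: nat
  assumes mask: "\<exists>r. inj_on r {..<p} \<and> (\<forall>k<p. r k < q)
                   \<and> (\<forall>k<p. \<forall>j<q. M k j = (if j = r k then 1 else 0))"
    and eta: "\<eta> > 0"
    and sigma: "\<sigma> > 0"
  shows "MSE p q M lam \<eta> \<sigma> x t =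
    (\<Sum>i<q. (1 - \<eta> * lam i * (\<Sum>k<p. M k i * M k i)) ^ (2 * t)
                 * (cmod (\<Sum>j<q. dft q i j * x j))\<^sup>2
           + \<sigma>\<^sup>2 * (1 - (1 - \<eta> * lam i * (\<Sum>k<p. M k i * M k i)) ^ t)\<^sup>2)"
proof -
  \<comment> \<open>The identity holds for every step size.\<close>
  obtain r where "sampling_mask p q M r"
    using mask by (auto simp: sampling_mask_def)
  then interpret sampling_mask p q M r .
  show ?thesis
    unfolding MSE_def has_bochner_integral_integral_eq[OF has_bochner_integral_sq_error[OF sigma]]
    by (simp add: decay_def mdiag_def dftv_def)
qed

end
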